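(* Let $T$ be a positive integer and let $\mathfrak{D}$ be a distribution over query–document pairs $(q,d)$. Suppose there is an unknown weight vector $w_*\in\mathbb{R}^T$, and that for each sampled pair $(q,d)$ one observes the feature vector $x_{(q,d)}$ together with the score $s_{(q,d)}=\langle w_*, x_{(q,d)}\rangle$. Let $$A=\mathbb{E}_{(q,d) \sim \mathfrak{D}} \left[ \tfrac{1}{\mathrm{len}(q)}\, x_{(q,d)}x_{(q,d)}^{\top} \right]\in\mathbb{R}^{T\times T},$$ and assume $\lambda_{\min}(A)>0$. Then there exist an absolute constant $C>0$ and an algorithm such that, for every $\delta\in(0,1)$, given $n \geq \frac{C}{\lambda_{\min}(A)} \log\left(\frac{T}{\delta}\right)$ pairs sampled i.i.d. from $\mathfrak{D}$ (with their observed feature vectors and scores), with probability at least $1-\delta$ the algorithm outputs exactly $w_*$.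
   Context: Tokens are elements of $[T]=\{1,\dots,T\}$. A query is a finite token sequence $q=(q_1,\dots,q_{\mathrm{len}(q)})$ and a document a finite token sequence $d=(d_1,\dots,d_{\mathrm{len}(d)})$. Fixed encoders assign unit vectors $E_q(q_i)\in\mathbb{R}^m$ to query token positions and $E_d(d_j)\in\mathbb{R}^m$ to document token positions. The feature vector $x_{(q,d)}\in\mathbb{R}^T$ has $t$-th coordinate equal to $\max_{j\in[\mathrm{len}(d)]} E_q(q_t)^\top E_d(d_j)$ if token $t$ occurs in $q$ (here $q_t$ denotes the occurrence of token $t$ in $q$), and $0$ otherwise. The paper models the Weighted Chamfer score with weights $w$ of the pair $(q,d)$ as the linear function $\langle w, x_{(q,d)}\rangle$; the observed scores are Weighted Chamfer scores with respect to the hidden weights $w_*$. $\lambda_{\min}$ denotes the smallest eigenvalue. *)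

theory Defs
  imports "HOL-Probability.Probability_Mass_Function" "Jordan_Normal_Form.Char_Poly"
begin

text \<open>Tokens are relabelled as 0,...,T-1 (instead of 1,...,T) to match 0-based
  vector indices. Queries and documents are token lists. Encoders are functions
  from tokens to real vectors of dimension m.\<close>

definition valid_pair :: "nat \<Rightarrow> nat list \<times> nat list \<Rightarrow> bool" where
  "valid_pair T qd \<longleftrightarrow> set (fst qd) \<subseteq> {..<T} \<and> set (snd qd) \<subseteq> {..<T} \<and> snd qd \<noteq> []"

definition feature ::
  "nat \<Rightarrow> (nat \<Rightarrow> real vec) \<Rightarrow> (nat \<Rightarrow> real vec) \<Rightarrow> nat list \<times> nat list \<Rightarrow> real vec" where
  "feature T Eq Ed qd = vec T (\<lambda>t.
     if t \<in> set (fst qd)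
     then Max ((\<lambda>j. Eq t \<bullet> Ed (snd qd ! j)) ` {..<length (snd qd)})
     else 0)"

definition moment_matrix ::
  "nat \<Rightarrow> (nat \<Rightarrow> real vec) \<Rightarrow> (nat \<Rightarrow> real vec) \<Rightarrow> (nat list \<times> nat list) pmf \<Rightarrow> real mat" where
  "moment_matrix T Eq Ed D = mat T T (\<lambda>(i, j).
     measure_pmf.expectation D (\<lambda>qd.
       (1 / real (length (fst qd))) * (feature T Eq Ed qd $ i) * (feature T Eq Ed qd $ j)))"

definition lambda_min :: "real mat \<Rightarrow> real" where
  "lambda_min A = Min {k. eigenvalue A k}"

end

theory Submission
  imports Defs
begin

(* The algorithm returns the unique solution w of the linear system <w, x> = s formed by the
   observations, so it recovers w_* as soon as the sampled feature vectors span R^T.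
   Let U be an orthonormal basis of the span of the features seen so far and P the orthogonal
   projection onto its complement. The quantity |P x|^2 / len(q) is at most 1 and has
   expectation tr(P A P) >= lambda_min(A) (T - |U|), so a fresh sample enlarges the span with
   probability at least lambda_min(A) (T - |U|). Induction on the number of samples bounds the
   probability that n samples do not span R^T by T (1 - lambda_min(A))^n <= T exp(-lambda_min(A) n),
   which is at most delta once n >= ln(T / delta) / lambda_min(A); so C = 1 works. *)

section \<open>Orthogonal projections\<close>

(* Vectors of R^n are functions nat => real of which only the coordinates below n matter. *)
definition dot :: "nat \<Rightarrow> (nat \<Rightarrow> real) \<Rightarrow> (nat \<Rightarrow> real) \<Rightarrow> real" where
  "dot n u v = (\<Sum>i<n. u i * v i)"

lemma dot_commute: "dot n u v = dot n v u"
  unfolding dot_def by (simp add: mult.commute)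

lemma dot_self_nonneg: "0 \<le> dot n v v"
  unfolding dot_def by (intro sum_nonneg) simp

lemma dot_self_eq_0_iff: "dot n v v = 0 \<longleftrightarrow> (\<forall>i<n. v i = 0)"
  unfolding dot_def by (subst sum_nonneg_eq_0_iff) auto

lemma dot_eq_0_if_vanishing: "\<forall>i<n. u i = 0 \<Longrightarrow> dot n u v = 0"
  unfolding dot_def by simp

lemma dot_indicator: "i < n \<Longrightarrow> dot n v (indicator {i}) = v i"
  unfolding dot_def by (simp add: indicator_def if_distrib sum.delta' cong: if_cong)

lemma dot_divide_right: "dot n u (\<lambda>i. v i / c) = dot n u v / c"
  unfolding dot_def by (simp add: sum_divide_distrib)

lemma square_dot_le: "(dot n u v)\<^sup>2 \<le> dot n u u * dot n v v"
  unfolding dot_def power2_eq_square[symmetric] by (rule Cauchy_Schwarz_ineq_sum)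

definition orthonormal :: "nat \<Rightarrow> (nat \<Rightarrow> real) list \<Rightarrow> bool" where
  "orthonormal n U \<longleftrightarrow>
     (\<forall>k<length U. \<forall>l<length U. dot n (U!k) (U!l) = (if k = l then 1 else 0))"

definition proj_compl :: "nat \<Rightarrow> (nat \<Rightarrow> real) list \<Rightarrow> (nat \<Rightarrow> real) \<Rightarrow> nat \<Rightarrow> real" where
  "proj_compl n U x = (\<lambda>i. x i - (\<Sum>k<length U. dot n (U!k) x * (U!k) i))"

lemma dot_proj_compl:
  "dot n v (proj_compl n U x) = dot n v x - (\<Sum>k<length U. dot n (U!k) x * dot n v (U!k))"
proof -
  have "dot n v (proj_compl n U x) =
      dot n v x - (\<Sum>i<n. \<Sum>k<length U. dot n (U!k) x * (v i * (U!k) i))"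
    unfolding dot_def proj_compl_def
    by (simp add: right_diff_distrib sum_subtractf sum_distrib_left mult_ac)
  also have "(\<Sum>i<n. \<Sum>k<length U. dot n (U!k) x * (v i * (U!k) i)) =
      (\<Sum>k<length U. dot n (U!k) x * dot n v (U!k))"
    by (subst sum.swap) (simp add: dot_def sum_distrib_left)
  finally show ?thesis .
qed

lemma dot_proj_compl_orthogonal:
  assumes "\<forall>u\<in>set U. dot n v u = 0"
  shows "dot n v (proj_compl n U x) = dot n v x"
  using assms by (simp add: dot_proj_compl)

lemma dot_member_proj_compl:
  assumes "orthonormal n U" "l < length U"
  shows "dot n (U!l) (proj_compl n U x) = 0"
proof -
  have "(\<Sum>k<length U. dot n (U!k) x * dot n (U!l) (U!k)) =
      (\<Sum>k<length U. if k = l then dot n (U!k) x else 0)"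
    using assms unfolding orthonormal_def by (intro sum.cong) auto
  also have "\<dots> = dot n (U!l) x" using assms(2) by (simp add: sum.delta')
  finally show ?thesis by (simp add: dot_proj_compl)
qed

lemma proj_compl_orthogonal:
  assumes "orthonormal n U"
  shows "\<forall>u\<in>set U. dot n (proj_compl n U x) u = 0"
  using dot_member_proj_compl[OF assms] by (auto simp: in_set_conv_nth dot_commute)

lemma dot_proj_compl_self:
  assumes "orthonormal n U"
  shows "dot n (proj_compl n U x) (proj_compl n U x) = dot n x x - (\<Sum>k<length U. (dot n (U!k) x)\<^sup>2)"
proof -
  have "dot n (proj_compl n U x) (proj_compl n U x) = dot n x (proj_compl n U x)"
    by (simp add: dot_proj_compl_orthogonal[OF proj_compl_orthogonal[OF assms]] dot_commute)
  also have "\<dots> = dot n x x - (\<Sum>k<length U. (dot n (U!k) x)\<^sup>2)"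
    by (simp add: dot_proj_compl power2_eq_square dot_commute)
  finally show ?thesis .
qed

lemma dot_proj_compl_self_le:
  "orthonormal n U \<Longrightarrow> dot n (proj_compl n U x) (proj_compl n U x) \<le> dot n x x"
  by (simp add: dot_proj_compl_self sum_nonneg)

lemma proj_compl_apply:
  assumes "i < n"
  shows "proj_compl n U x i = dot n (proj_compl n U (indicator {i})) x"
proof -
  have "dot n (proj_compl n U (indicator {i})) x = dot n x (proj_compl n U (indicator {i}))"
    by (rule dot_commute)
  also have "\<dots> = x i - (\<Sum>k<length U. (U!k) i * dot n x (U!k))"
    by (simp add: dot_proj_compl dot_indicator assms)
  also have "\<dots> = proj_compl n U x i"
    unfolding proj_compl_def by (simp add: dot_commute[of n x] mult.commute)
  finally show ?thesis ..
qed

lemma sum_dot_proj_compl_indicator: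
  assumes "orthonormal n U"
  shows "(\<Sum>i<n. dot n (proj_compl n U (indicator {i})) (proj_compl n U (indicator {i})))
    = real n - real (length U)"
proof -
  have "(\<Sum>i<n. dot n (proj_compl n U (indicator {i})) (proj_compl n U (indicator {i})))
      = (\<Sum>i<n. 1 - (\<Sum>k<length U. ((U!k) i)\<^sup>2))"
    by (intro sum.cong refl)
      (simp add: dot_proj_compl_self[OF assms] dot_indicator)
  also have "\<dots> = real n - (\<Sum>k<length U. dot n (U!k) (U!k))"
    by (simp add: sum_subtractf sum.swap[of _ "{..<n}"] dot_def power2_eq_square)
  also have "(\<Sum>k<length U. dot n (U!k) (U!k)) = real (length U)"
    using assms unfolding orthonormal_def by simp
  finally show ?thesis .
qed

lemma orthonormal_length_le:
  assumes "orthonormal n U"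
  shows "length U \<le> n"
proof -
  have "0 \<le> (\<Sum>i<n. dot n (proj_compl n U (indicator {i})) (proj_compl n U (indicator {i})))"
    by (intro sum_nonneg dot_self_nonneg)
  thus ?thesis using sum_dot_proj_compl_indicator[OF assms] by simp
qed

lemma orthonormal_complete:
  assumes U: "orthonormal n U" "length U = n" and v: "\<forall>u\<in>set U. dot n v u = 0" and "i < n"
  shows "v i = 0"
proof -
  let ?e = "proj_compl n U (indicator {i})"
  have "(\<Sum>j<n. dot n (proj_compl n U (indicator {j})) (proj_compl n U (indicator {j}))) = 0"
    using sum_dot_proj_compl_indicator[OF U(1)] U(2) by simp
  hence "dot n ?e ?e = 0"
    using \<open>i < n\<close> by (subst (asm) sum_nonneg_eq_0_iff) (auto intro: dot_self_nonneg)
  hence "dot n v ?e = 0"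
    by (simp add: dot_self_eq_0_iff dot_commute[of n v] dot_eq_0_if_vanishing)
  thus ?thesis using dot_proj_compl_orthogonal[OF v] dot_indicator[OF \<open>i < n\<close>] by simp
qed

lemma orthonormal_snoc_normalized:
  assumes U: "orthonormal n U"
    and nz: "dot n (proj_compl n U x) (proj_compl n U x) \<noteq> 0"
  defines "u \<equiv> \<lambda>i. proj_compl n U x i / sqrt (dot n (proj_compl n U x) (proj_compl n U x))"
  shows "orthonormal n (U @ [u])"
proof -
  define d where "d = dot n (proj_compl n U x) (proj_compl n U x)"
  have "d > 0" using nz dot_self_nonneg[of n "proj_compl n U x"] unfolding d_def by linarith
  have u_unit: "dot n u u = 1"
  proof -
    have "dot n u u = d / (sqrt d)\<^sup>2"
      unfolding u_def d_def dot_def by (simp add: sum_divide_distrib power2_eq_square)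
    thus ?thesis using \<open>d > 0\<close> by simp
  qed
  have U_orth_u: "dot n (U!k) u = 0" if "k < length U" for k
    using dot_member_proj_compl[OF U that] by (simp add: u_def dot_divide_right)
  show ?thesis
    unfolding orthonormal_def
  proof (intro allI impI)
    fix k l assume "k < length (U @ [u])" "l < length (U @ [u])"
    then consider "k < length U" "l < length U" | "k < length U" "l = length U"
      | "k = length U" "l < length U" | "k = length U" "l = length U"
      by fastforce
    thus "dot n ((U @ [u]) ! k) ((U @ [u]) ! l) = (if k = l then 1 else 0)"
    proof cases
      case 1
      thus ?thesis using U by (simp add: orthonormal_def nth_append)
    next
      case 2
      thus ?thesis using U_orth_u by (simp add: nth_append)
    next
      case 3
      thus ?thesis using U_orth_u[of l] by (simp add: nth_append dot_commute)
    next
      case 4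
      thus ?thesis using u_unit by (simp add: nth_append)
    qed
  qed
qed

definition spanning :: "nat \<Rightarrow> (nat \<Rightarrow> real) list \<Rightarrow> bool" where
  "spanning n V \<longleftrightarrow> (\<forall>v. (\<forall>x\<in>set V. dot n v x = 0) \<longrightarrow> (\<forall>i<n. v i = 0))"

lemma spanningD: "spanning n V \<Longrightarrow> (\<And>x. x \<in> set V \<Longrightarrow> dot n v x = 0) \<Longrightarrow> i < n \<Longrightarrow> v i = 0"
  unfolding spanning_def by blast

lemma spanning_mono: "spanning n V \<Longrightarrow> set V \<subseteq> set W \<Longrightarrow> spanning n W"
  unfolding spanning_def by blast

lemma spanning_orthonormal_complete: "orthonormal n U \<Longrightarrow> length U = n \<Longrightarrow> spanning n U"
  unfolding spanning_def using orthonormal_complete by blast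

lemma spanning_snoc_proj_compl:
  assumes "spanning n ((U @ [\<lambda>i. proj_compl n U x i / c]) @ V)"
  shows "spanning n (U @ x # V)"
  unfolding spanning_def
proof (intro allI impI)
  fix v i assume v: "\<forall>y\<in>set (U @ x # V). dot n v y = 0" and "i < n"
  hence u: "dot n v (\<lambda>i. proj_compl n U x i / c) = 0"
    by (simp add: dot_divide_right dot_proj_compl_orthogonal)
  have orth: "dot n v y = 0" if "y \<in> set ((U @ [\<lambda>i. proj_compl n U x i / c]) @ V)" for y
    using that v u by auto
  show "v i = 0" by (rule spanningD[OF assms orth \<open>i < n\<close>])
qed

section \<open>Quadratic forms and the smallest eigenvalue\<close>

definition bilin :: "nat \<Rightarrow> real mat \<Rightarrow> (nat \<Rightarrow> real) \<Rightarrow> (nat \<Rightarrow> real) \<Rightarrow> real" where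
  "bilin n A u v = (\<Sum>i<n. \<Sum>j<n. u i * A $$ (i, j) * v j)"

definition apply_mat :: "nat \<Rightarrow> real mat \<Rightarrow> (nat \<Rightarrow> real) \<Rightarrow> nat \<Rightarrow> real" where
  "apply_mat n A v = (\<lambda>i. \<Sum>j<n. A $$ (i, j) * v j)"

lemma bilin_eq_dot_apply_mat: "bilin n A u v = dot n u (apply_mat n A v)"
  unfolding bilin_def dot_def apply_mat_def by (simp add: sum_distrib_left mult_ac)

lemma bilin_commute:
  assumes "\<forall>i<n. \<forall>j<n. A $$ (i, j) = A $$ (j, i)"
  shows "bilin n A u v = bilin n A v u"
  unfolding bilin_def using assms by (subst sum.swap) (auto intro!: sum.cong simp: mult_ac)

lemma bilin_add_scaled:
  assumes "\<forall>i<n. \<forall>j<n. A $$ (i, j) = A $$ (j, i)"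
  shows "bilin n A (\<lambda>i. u i + t * v i) (\<lambda>i. u i + t * v i)
    = bilin n A u u + 2 * t * bilin n A u v + t\<^sup>2 * bilin n A v v"
proof -
  have "bilin n A (\<lambda>i. u i + t * v i) (\<lambda>i. u i + t * v i)
      = bilin n A u u + t * bilin n A u v + t * bilin n A v u + t\<^sup>2 * bilin n A v v"
    unfolding bilin_def by (simp add: algebra_simps sum.distrib sum_distrib_left power2_eq_square)
  thus ?thesis using bilin_commute[OF assms, of v u] by simp
qed

lemma nonneg_quadratic_discriminant:
  fixes a b c :: real
  assumes "\<forall>t. 0 \<le> a + 2 * t * b + t\<^sup>2 * c" "0 \<le> c"
  shows "b\<^sup>2 \<le> a * c"
proof (cases "c = 0")
  case True
  show ?thesis
  proof (cases "b = 0")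
    case False
    have "0 \<le> a + 2 * (-(a + 1) / (2 * b)) * b + (-(a + 1) / (2 * b))\<^sup>2 * c"
      using assms(1) by blast
    thus ?thesis using False True by (simp add: field_simps)
  qed (simp add: True)
next
  case False
  hence c: "c > 0" using assms(2) by simp
  have "0 \<le> a + 2 * (-b / c) * b + (-b / c)\<^sup>2 * c" using assms(1) by blast
  hence "0 \<le> a - b\<^sup>2 / c" using c by (simp add: field_simps power2_eq_square)
  thus ?thesis using c by (simp add: field_simps)
qed

lemma bilin_Cauchy_Schwarz:
  assumes "\<forall>i<n. \<forall>j<n. A $$ (i, j) = A $$ (j, i)" and "\<forall>w. 0 \<le> bilin n A w w"
  shows "(bilin n A u v)\<^sup>2 \<le> bilin n A u u * bilin n A v v"
  using assms bilin_add_scaled[OF assms(1), of u _ v]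
  by (intro nonneg_quadratic_discriminant) metis+

lemma abs_bilin_self_le: "\<bar>bilin n A w w\<bar> \<le> (\<Sum>i<n. \<Sum>j<n. \<bar>A $$ (i, j)\<bar>) * dot n w w"
proof -
  have wij: "\<bar>w i * w j\<bar> \<le> dot n w w" if "i < n" "j < n" for i j
  proof -
    have sq: "(w k)\<^sup>2 \<le> dot n w w" if "k < n" for k
      unfolding dot_def power2_eq_square using that by (intro member_le_sum) auto
    have "\<bar>w i * w j\<bar> \<le> ((w i)\<^sup>2 + (w j)\<^sup>2) / 2"
      using sum_squares_bound[of "\<bar>w i\<bar>" "\<bar>w j\<bar>"] by (simp add: abs_mult field_simps)
    also have "\<dots> \<le> dot n w w" using sq[OF \<open>i < n\<close>] sq[OF \<open>j < n\<close>] by simp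
    finally show ?thesis .
  qed
  have "\<bar>bilin n A w w\<bar> \<le> (\<Sum>i<n. \<Sum>j<n. \<bar>w i * A $$ (i, j) * w j\<bar>)"
    unfolding bilin_def by (rule order_trans[OF sum_abs sum_mono[OF sum_abs]])
  also have "\<dots> \<le> (\<Sum>i<n. \<Sum>j<n. \<bar>A $$ (i, j)\<bar> * dot n w w)"
  proof (intro sum_mono)
    fix i j assume "i \<in> {..<n}" "j \<in> {..<n}"
    hence "\<bar>A $$ (i, j)\<bar> * \<bar>w i * w j\<bar> \<le> \<bar>A $$ (i, j)\<bar> * dot n w w"
      using wij by (intro mult_left_mono) auto
    thus "\<bar>w i * A $$ (i, j) * w j\<bar> \<le> \<bar>A $$ (i, j)\<bar> * dot n w w"
      by (simp add: abs_mult mult_ac)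
  qed
  finally show ?thesis by (simp add: sum_distrib_right)
qed

lemma dot_apply_mat_le_bilin:
  assumes sym: "\<forall>i<n. \<forall>j<n. A $$ (i, j) = A $$ (j, i)" and psd: "\<forall>w. 0 \<le> bilin n A w w"
  shows "dot n (apply_mat n A v) (apply_mat n A v) \<le> (\<Sum>i<n. \<Sum>j<n. \<bar>A $$ (i, j)\<bar>) * bilin n A v v"
proof -
  define w where "w = apply_mat n A v"
  define G where "G = (\<Sum>i<n. \<Sum>j<n. \<bar>A $$ (i, j)\<bar>)"
  show ?thesis
  proof (cases "dot n w w = 0")
    case True
    thus ?thesis using psd by (simp add: w_def G_def sum_nonneg)
  next
    case False
    hence pos: "dot n w w > 0" using dot_self_nonneg[of n w] by linarith
    have "(dot n w w)\<^sup>2 = (bilin n A w v)\<^sup>2" by (simp add: bilin_eq_dot_apply_mat w_def)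
    also have "\<dots> \<le> bilin n A w w * bilin n A v v" by (rule bilin_Cauchy_Schwarz[OF sym psd])
    also have "\<dots> \<le> (G * dot n w w) * bilin n A v v"
      using abs_bilin_self_le[of n A w] psd unfolding G_def by (intro mult_right_mono) auto
    finally have "dot n w w * dot n w w \<le> dot n w w * (G * bilin n A v v)"
      by (simp add: power2_eq_square mult_ac)
    thus ?thesis using pos by (simp add: w_def G_def)
  qed
qed

lemma dot_le_left_inverse:
  assumes N: "N \<in> carrier_mat n n" and M: "M \<in> carrier_mat n n" and NM: "N * M = 1\<^sub>m n"
  shows "dot n v v \<le> (\<Sum>i<n. \<Sum>k<n. (N $$ (i, k))\<^sup>2) * dot n (apply_mat n M v) (apply_mat n M v)"
proof -
  define w where "w = apply_mat n M v"
  have v_eq: "v i = (\<Sum>k<n. N $$ (i, k) * w k)" if "i < n" for i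
  proof -
    have "(\<Sum>k<n. N $$ (i, k) * w k) = (\<Sum>k<n. \<Sum>j<n. N $$ (i, k) * M $$ (k, j) * v j)"
      unfolding w_def apply_mat_def by (simp add: sum_distrib_left mult.assoc)
    also have "\<dots> = (\<Sum>j<n. (\<Sum>k<n. N $$ (i, k) * M $$ (k, j)) * v j)"
      by (subst sum.swap) (simp add: sum_distrib_right)
    also have "\<dots> = (\<Sum>j<n. (N * M) $$ (i, j) * v j)"
      using N M that by (intro sum.cong refl) (simp add: scalar_prod_def atLeast0LessThan)
    also have "\<dots> = (\<Sum>j<n. if j = i then v j else 0)"
      using that by (intro sum.cong refl) (simp add: NM)
    also have "\<dots> = v i" using that by simp
    finally show ?thesis by simp
  qed
  have "dot n v v \<le> (\<Sum>i<n. (\<Sum>k<n. (N $$ (i, k))\<^sup>2) * dot n w w)"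
    unfolding dot_def
  proof (intro sum_mono)
    fix i assume "i \<in> {..<n}"
    hence "v i * v i = (\<Sum>k<n. N $$ (i, k) * w k)\<^sup>2" using v_eq by (simp add: power2_eq_square)
    also have "\<dots> \<le> (\<Sum>k<n. (N $$ (i, k))\<^sup>2) * (\<Sum>k<n. (w k)\<^sup>2)" by (rule Cauchy_Schwarz_ineq_sum)
    finally show "v i * v i \<le> (\<Sum>k<n. (N $$ (i, k))\<^sup>2) * (\<Sum>i<n. w i * w i)"
      by (simp add: power2_eq_square)
  qed
  thus ?thesis by (simp add: sum_distrib_right w_def)
qed

lemma invertible_psd_coercive:
  assumes M: "M \<in> carrier_mat n n" and det: "det M \<noteq> 0"
    and sym: "\<forall>i<n. \<forall>j<n. M $$ (i, j) = M $$ (j, i)" and psd: "\<forall>w. 0 \<le> bilin n M w w"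
  shows "\<exists>c>0. \<forall>v. c * dot n v v \<le> bilin n M v v"
proof -
  obtain N where N: "N \<in> carrier_mat n n" and NM: "N * M = 1\<^sub>m n"
    using det_non_zero_imp_unit[OF M det, unfolded Units_def, of "()"] by (auto simp: ring_mat_def)
  define F where "F = (\<Sum>i<n. \<Sum>k<n. (N $$ (i, k))\<^sup>2)"
  define G where "G = (\<Sum>i<n. \<Sum>j<n. \<bar>M $$ (i, j)\<bar>)"
  have "F \<ge> 0" "G \<ge> 0" unfolding F_def G_def by (auto intro!: sum_nonneg)
  have "dot n v v \<le> (F * G + 1) * bilin n M v v" for v
  proof -
    have "dot n v v \<le> F * (G * bilin n M v v)"
      using dot_le_left_inverse[OF N M NM, of v] dot_apply_mat_le_bilin[OF sym psd, of v]
        \<open>F \<ge> 0\<close> unfolding F_def G_def by (meson mult_left_mono order_trans)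
    also have "\<dots> \<le> (F * G + 1) * bilin n M v v" using psd by (simp add: algebra_simps)
    finally show ?thesis .
  qed
  moreover have "F * G + 1 > 0"
    using mult_nonneg_nonneg[OF \<open>F \<ge> 0\<close> \<open>G \<ge> 0\<close>] by linarith
  ultimately show ?thesis
    by (intro exI[of _ "1 / (F * G + 1)"]) (auto simp: field_simps)
qed

lemma lambda_min_le:
  assumes A: "A \<in> carrier_mat n n" and "eigenvalue A t"
  shows "lambda_min A \<le> t"
proof -
  have "{k. eigenvalue A k} = {k. poly (char_poly A) k = 0}"
    using eigenvalue_root_char_poly[OF A] by auto
  moreover have "char_poly A \<noteq> 0" using degree_monic_char_poly[OF A] by auto
  ultimately have "finite {k. eigenvalue A k}" using poly_roots_finite by simp
  thus ?thesis unfolding lambda_min_def using assms(2) by (intro Min_le) auto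
qed

(* If s is the largest t with t |v|^2 <= v^T A v for all v but not an eigenvalue, then A - s I
   is invertible and positive semidefinite, hence coercive, and s could be increased. *)
lemma eigenvalue_max_Rayleigh_lower_bound:
  assumes A: "A \<in> carrier_mat n n" and sym: "\<forall>i<n. \<forall>j<n. A $$ (i, j) = A $$ (j, i)"
    and lower: "\<forall>v. s * dot n v v \<le> bilin n A v v"
    and max: "\<And>t. \<forall>v. t * dot n v v \<le> bilin n A v v \<Longrightarrow> t \<le> s"
  shows "eigenvalue A s"
proof (rule ccontr)
  assume "\<not> eigenvalue A s"
  define M where "M = char_matrix A s"
  have M: "M \<in> carrier_mat n n" unfolding M_def using A by simp
  have Mij: "M $$ (i, j) = A $$ (i, j) - (if i = j then s else 0)" if "i < n" "j < n" for i j
    unfolding M_def char_matrix_def using A that by auto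
  have bilin_M: "bilin n M v v = bilin n A v v - s * dot n v v" for v
  proof -
    have "bilin n M v v
        = (\<Sum>i<n. \<Sum>j<n. v i * A $$ (i, j) * v j - (if i = j then s * v i * v j else 0))"
      unfolding bilin_def by (intro sum.cong refl) (auto simp: Mij algebra_simps)
    thus ?thesis
      unfolding bilin_def dot_def by (simp add: sum_subtractf sum.delta sum_distrib_left mult_ac)
  qed
  have "det M \<noteq> 0" using \<open>\<not> eigenvalue A s\<close> eigenvalue_det[OF A] unfolding M_def by simp
  moreover have "\<forall>i<n. \<forall>j<n. M $$ (i, j) = M $$ (j, i)" using sym Mij by auto
  moreover have "\<forall>w. 0 \<le> bilin n M w w" using lower by (simp add: bilin_M)
  ultimately obtain c where "c > 0" and c: "\<forall>v. c * dot n v v \<le> bilin n M v v"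
    using invertible_psd_coercive[OF M] by blast
  have "s + c \<le> s" using c by (intro max) (simp add: bilin_M algebra_simps)
  thus False using \<open>c > 0\<close> by simp
qed

lemma lambda_min_mult_dot_le_bilin:
  assumes A: "A \<in> carrier_mat n n" and sym: "\<forall>i<n. \<forall>j<n. A $$ (i, j) = A $$ (j, i)"
  shows "lambda_min A * dot n v v \<le> bilin n A v v"
proof (cases "n = 0")
  case True
  thus ?thesis by (simp add: dot_def bilin_def)
next
  case False
  define R where "R = {t. \<forall>v. t * dot n v v \<le> bilin n A v v}"
  define e where "e = (indicator {0} :: nat \<Rightarrow> real)"
  have e: "dot n e e = 1" using False by (simp add: e_def dot_indicator)
  have "- (\<Sum>i<n. \<Sum>j<n. \<bar>A $$ (i, j)\<bar>) \<in> R"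
  proof (unfold R_def, intro CollectI allI)
    fix v
    show "- (\<Sum>i<n. \<Sum>j<n. \<bar>A $$ (i, j)\<bar>) * dot n v v \<le> bilin n A v v"
      using abs_bilin_self_le[of n A v] by linarith
  qed
  hence "R \<noteq> {}" by blast
  have "bdd_above R"
  proof (rule bdd_aboveI)
    fix t assume "t \<in> R"
    hence "t * dot n e e \<le> bilin n A e e" unfolding R_def by blast
    thus "t \<le> bilin n A e e" using e by simp
  qed
  have lower: "\<forall>v. Sup R * dot n v v \<le> bilin n A v v"
  proof
    fix v
    show "Sup R * dot n v v \<le> bilin n A v v"
    proof (cases "dot n v v = 0")
      case True
      hence "bilin n A v v = 0" by (simp add: bilin_def dot_self_eq_0_iff)
      thus ?thesis using True by simp
    next
      case False
      hence d: "dot n v v > 0" using dot_self_nonneg[of n v] by linarith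
      have "Sup R \<le> bilin n A v v / dot n v v"
        using \<open>R \<noteq> {}\<close> d by (intro cSup_least) (auto simp: R_def field_simps)
      thus ?thesis using d by (simp add: field_simps)
    qed
  qed
  have "eigenvalue A (Sup R)"
    using A sym lower
    by (rule eigenvalue_max_Rayleigh_lower_bound)
      (use \<open>bdd_above R\<close> in \<open>auto simp: R_def intro: cSup_upper\<close>)
  hence "lambda_min A * dot n v v \<le> Sup R * dot n v v"
    using lambda_min_le[OF A] dot_self_nonneg by (intro mult_right_mono) auto
  also have "\<dots> \<le> bilin n A v v" using lower by blast
  finally show ?thesis .
qed

section \<open>Random samples spanning the space\<close>

lemma measure_bind_pmf:
  "measure_pmf.prob (bind_pmf M f) A = measure_pmf.expectation M (\<lambda>x. measure_pmf.prob (f x) A)"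
  unfolding measure_pmf_bind
  by (rule measure_pmf.measure_bind[where N="count_space UNIV" and f="\<lambda>x. measure_pmf (f x)"])
    (auto simp: measurable_pmf_measure1 measure_pmf_in_subprob_algebra)

lemma prob_replicate_pmf_Suc:
  "measure_pmf.prob (replicate_pmf (Suc k) p) A =
    measure_pmf.expectation p (\<lambda>x. measure_pmf.prob (replicate_pmf k p) {xs. x # xs \<in> A})"
proof -
  have "replicate_pmf (Suc k) p = bind_pmf p (\<lambda>x. map_pmf (\<lambda>xs. x # xs) (replicate_pmf k p))"
    by (simp add: map_pmf_def)
  thus ?thesis by (simp add: measure_bind_pmf vimage_def)
qed

lemma integrable_pmf_bounded:
  fixes f :: "'a \<Rightarrow> real"
  assumes "\<And>x. x \<in> set_pmf p \<Longrightarrow> \<bar>f x\<bar> \<le> B"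
  shows "integrable (measure_pmf p) f"
  by (rule measure_pmf.integrable_const_bound[where B=B]) (use assms in \<open>auto simp: AE_measure_pmf_iff\<close>)

lemma expectation_affine_indicator:
  "measure_pmf.expectation p (\<lambda>x. (a - indicator E x) * c) = (a - measure_pmf.prob p E) * c"
proof -
  have "integrable (measure_pmf p) (indicator E :: _ \<Rightarrow> real)"
    by (rule integrable_pmf_bounded[where B=1]) (simp add: indicator_def)
  thus ?thesis by (simp add: Bochner_Integration.integral_diff)
qed

(* The abstract sampling model: X x is the feature vector of a sample, \<rho> x its weight (1 / len q
   in the paper), and \<kappa> a lower bound for the smallest eigenvalue of E[\<rho> X X^T]. *)
locale weighted_design =
  fixes n :: nat and D :: "'a pmf" and X :: "'a \<Rightarrow> nat \<Rightarrow> real"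
    and \<rho> :: "'a \<Rightarrow> real" and \<kappa> :: real
  assumes weight_nonneg: "x \<in> set_pmf D \<Longrightarrow> 0 \<le> \<rho> x"
    and weighted_norm_le_1: "x \<in> set_pmf D \<Longrightarrow> \<rho> x * dot n (X x) (X x) \<le> 1"
    and coercive: "\<kappa> * dot n v v \<le> measure_pmf.expectation D (\<lambda>x. \<rho> x * (dot n v (X x))\<^sup>2)"
begin

lemma integrable_weighted_square: "integrable (measure_pmf D) (\<lambda>x. \<rho> x * (dot n v (X x))\<^sup>2)"
proof (rule integrable_pmf_bounded)
  fix x assume x: "x \<in> set_pmf D"
  have "\<rho> x * (dot n v (X x))\<^sup>2 \<le> \<rho> x * (dot n v v * dot n (X x) (X x))"
    using square_dot_le weight_nonneg[OF x] by (rule mult_left_mono)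
  also have "\<dots> = dot n v v * (\<rho> x * dot n (X x) (X x))" by (simp add: mult_ac)
  also have "\<dots> \<le> dot n v v * 1"
    using weighted_norm_le_1[OF x] dot_self_nonneg by (rule mult_left_mono)
  finally show "\<bar>\<rho> x * (dot n v (X x))\<^sup>2\<bar> \<le> dot n v v" using weight_nonneg[OF x] by simp
qed

definition escape_event :: "(nat \<Rightarrow> real) list \<Rightarrow> 'a set" where
  "escape_event U = {x. dot n (proj_compl n U (X x)) (proj_compl n U (X x)) \<noteq> 0}"

(* The weighted squared length of the projection of a sample onto the complement of span U is at
   most 1 and vanishes outside the escape event; its expectation is the trace of the projected
   moment matrix, which is at least kappa times the codimension. *)
lemma escape_probability:
  assumes U: "orthonormal n U"
  shows "(real n - real (length U)) * \<kappa> \<le> measure_pmf.prob D (escape_event U)"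
proof -
  define e where "e i = proj_compl n U (indicator {i})" for i
  define g where "g x = \<rho> x * dot n (proj_compl n U (X x)) (proj_compl n U (X x))" for x
  have g_eq: "g = (\<lambda>x. \<Sum>i<n. \<rho> x * (dot n (e i) (X x))\<^sup>2)"
  proof
    fix x
    have "dot n (proj_compl n U (X x)) (proj_compl n U (X x)) = (\<Sum>i<n. (dot n (e i) (X x))\<^sup>2)"
      unfolding dot_def[of n "proj_compl n U (X x)"] e_def
      by (intro sum.cong refl) (simp add: proj_compl_apply power2_eq_square)
    thus "g x = (\<Sum>i<n. \<rho> x * (dot n (e i) (X x))\<^sup>2)" unfolding g_def by (simp add: sum_distrib_left)
  qed
  have g_le: "g x \<le> indicator (escape_event U) x" if "x \<in> set_pmf D" for x
  proof (cases "x \<in> escape_event U")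
    case True
    have "g x \<le> \<rho> x * dot n (X x) (X x)"
      unfolding g_def using dot_proj_compl_self_le[OF U] weight_nonneg[OF that]
      by (rule mult_left_mono)
    thus ?thesis using weighted_norm_le_1[OF that] True by simp
  qed (simp add: g_def escape_event_def)
  have "(real n - real (length U)) * \<kappa> = \<kappa> * (\<Sum>i<n. dot n (e i) (e i))"
    using sum_dot_proj_compl_indicator[OF U] by (simp add: e_def)
  also have "\<dots> = (\<Sum>i<n. \<kappa> * dot n (e i) (e i))" by (rule sum_distrib_left)
  also have "\<dots> \<le> (\<Sum>i<n. measure_pmf.expectation D (\<lambda>x. \<rho> x * (dot n (e i) (X x))\<^sup>2))"
    by (intro sum_mono coercive)
  also have "\<dots> = measure_pmf.expectation D g"
    unfolding g_eq by (rule Bochner_Integration.integral_sum[symmetric]) (rule integrable_weighted_square)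
  also have "\<dots> \<le> measure_pmf.expectation D (indicator (escape_event U))"
  proof (rule integral_mono_AE)
    show "integrable (measure_pmf D) g"
      unfolding g_eq by (intro Bochner_Integration.integrable_sum integrable_weighted_square)
    show "integrable (measure_pmf D) (indicator (escape_event U) :: _ \<Rightarrow> real)"
      by (rule integrable_pmf_bounded[where B=1]) (simp add: indicator_def)
    show "AE x in measure_pmf D. g x \<le> indicator (escape_event U) x" by (rule AE_pmfI) (rule g_le)
  qed
  finally show ?thesis by simp
qed

lemma coercivity_le_1:
  assumes "0 < n"
  shows "\<kappa> \<le> 1"
proof -
  have "real n * \<kappa> \<le> measure_pmf.prob D (escape_event [])"
    using escape_probability[of "[]"] by (simp add: orthonormal_def)
  also have "\<dots> \<le> 1" by (rule measure_pmf.prob_le_1)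
  finally have "real n * \<kappa> \<le> 1" .
  show ?thesis
  proof (rule ccontr)
    assume "\<not> \<kappa> \<le> 1"
    hence "1 * \<kappa> \<le> real n * \<kappa>" using assms by (intro mult_right_mono) auto
    thus False using \<open>real n * \<kappa> \<le> 1\<close> \<open>\<not> \<kappa> \<le> 1\<close> by linarith
  qed
qed

lemma prob_not_spanning_complete:
  assumes "orthonormal n U" "length U = n"
  shows "measure_pmf.prob p {S. \<not> spanning n (U @ map X S)} = 0"
proof -
  have "spanning n (U @ map X S)" for S
    using spanning_mono[OF spanning_orthonormal_complete[OF assms]] by simp
  thus ?thesis by simp
qed

lemma prob_not_spanning_Cons_le:
  assumes U: "orthonormal n U"
    and IH: "\<And>U'. orthonormal n U' \<Longrightarrow>
      measure_pmf.prob p {S. \<not> spanning n (U' @ map X S)} \<le> (real n - real (length U')) * c"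
  shows "measure_pmf.prob p {S. \<not> spanning n (U @ map X (x # S))}
    \<le> (real n - real (length U) - indicator (escape_event U) x) * c"
proof (cases "x \<in> escape_event U")
  case True
  define u where
    "u = (\<lambda>i. proj_compl n U (X x) i / sqrt (dot n (proj_compl n U (X x)) (proj_compl n U (X x))))"
  have "orthonormal n (U @ [u])"
    using orthonormal_snoc_normalized[OF U] True by (simp add: escape_event_def u_def)
  have "{S. \<not> spanning n (U @ map X (x # S))} \<subseteq> {S. \<not> spanning n ((U @ [u]) @ map X S)}"
    using spanning_snoc_proj_compl unfolding u_def by auto
  hence "measure_pmf.prob p {S. \<not> spanning n (U @ map X (x # S))}
      \<le> measure_pmf.prob p {S. \<not> spanning n ((U @ [u]) @ map X S)}"
    by (rule measure_pmf.finite_measure_mono) simp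
  also have "\<dots> \<le> (real n - real (length U) - 1) * c"
    using IH[OF \<open>orthonormal n (U @ [u])\<close>] by (simp add: algebra_simps)
  finally show ?thesis using True by simp
next
  case False
  have "{S. \<not> spanning n (U @ map X (x # S))} \<subseteq> {S. \<not> spanning n (U @ map X S)}"
    using spanning_mono[of n "U @ map X S" "U @ map X (x # S)" for S] by auto
  hence "measure_pmf.prob p {S. \<not> spanning n (U @ map X (x # S))}
      \<le> measure_pmf.prob p {S. \<not> spanning n (U @ map X S)}"
    by (rule measure_pmf.finite_measure_mono) simp
  also have "\<dots> \<le> (real n - real (length U)) * c" by (rule IH[OF U])
  finally show ?thesis using False by simp
qed

lemma prob_not_spanning_Suc_le:
  assumes U: "orthonormal n U" and "length U < n"
    and IH: "\<And>U'. orthonormal n U' \<Longrightarrow> measure_pmf.prob (replicate_pmf k D)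
      {S. \<not> spanning n (U' @ map X S)} \<le> (real n - real (length U')) * (1 - \<kappa>) ^ k"
  shows "measure_pmf.prob (replicate_pmf (Suc k) D) {S. \<not> spanning n (U @ map X S)}
    \<le> (real n - real (length U)) * (1 - \<kappa>) ^ Suc k"
proof -
  define a where "a = real n - real (length U)"
  define c where "c = 1 - \<kappa>"
  have "0 \<le> c" using \<open>length U < n\<close> coercivity_le_1 by (simp add: c_def)
  have "measure_pmf.prob (replicate_pmf (Suc k) D) {S. \<not> spanning n (U @ map X S)}
      = measure_pmf.expectation D
          (\<lambda>x. measure_pmf.prob (replicate_pmf k D) {S. \<not> spanning n (U @ map X (x # S))})"
    unfolding prob_replicate_pmf_Suc by simp
  also have "\<dots> \<le> measure_pmf.expectation D (\<lambda>x. (a - indicator (escape_event U) x) * c ^ k)"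
  proof (rule integral_mono)
    show "integrable (measure_pmf D)
        (\<lambda>x. measure_pmf.prob (replicate_pmf k D) {S. \<not> spanning n (U @ map X (x # S))})"
      by (rule integrable_pmf_bounded[where B=1]) simp
    show "integrable (measure_pmf D) (\<lambda>x. (a - indicator (escape_event U) x) * c ^ k)"
      by (rule integrable_pmf_bounded[where B="(\<bar>a\<bar> + 1) * \<bar>c ^ k\<bar>"])
        (auto simp: indicator_def abs_mult intro!: mult_right_mono)
  qed (unfold a_def c_def, rule prob_not_spanning_Cons_le[OF U IH])
  also have "\<dots> = (a - measure_pmf.prob D (escape_event U)) * c ^ k"
    by (rule expectation_affine_indicator)
  also have "\<dots> \<le> (a - a * \<kappa>) * c ^ k"
    using escape_probability[OF U] \<open>0 \<le> c\<close> by (intro mult_right_mono) (simp_all add: a_def)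
  also have "\<dots> = a * c ^ Suc k" by (simp add: c_def algebra_simps)
  finally show ?thesis by (simp add: a_def c_def)
qed

lemma prob_not_spanning_le:
  assumes "orthonormal n U"
  shows "measure_pmf.prob (replicate_pmf k D) {S. \<not> spanning n (U @ map X S)}
    \<le> (real n - real (length U)) * (1 - \<kappa>) ^ k"
  using assms
proof (induction k arbitrary: U)
  case 0
  show ?case
  proof (cases "length U = n")
    case True
    thus ?thesis using prob_not_spanning_complete[OF 0] by simp
  next
    case False
    hence "1 \<le> real n - real (length U)" using orthonormal_length_le[OF 0] by simp
    moreover have "measure_pmf.prob (replicate_pmf 0 D) {S. \<not> spanning n (U @ map X S)} \<le> 1"
      by (rule measure_pmf.prob_le_1)
    ultimately show ?thesis unfolding power_0 mult_1_right by linarith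
  qed
next
  case (Suc k)
  show ?case
  proof (cases "length U = n")
    case True
    thus ?thesis using prob_not_spanning_complete[OF Suc.prems] by simp
  next
    case False
    hence "length U < n" using orthonormal_length_le[OF Suc.prems] by simp
    thus ?thesis using prob_not_spanning_Suc_le[OF Suc.prems _ Suc.IH] by blast
  qed
qed

end

section \<open>Weighted Chamfer features\<close>

lemma abs_scalar_prod_unit_le_1:
  fixes u v :: "real vec"
  assumes "u \<in> carrier_vec m" "v \<in> carrier_vec m" "u \<bullet> u = 1" "v \<bullet> v = 1"
  shows "\<bar>u \<bullet> v\<bar> \<le> 1"
proof -
  have "(u \<bullet> v)\<^sup>2 \<le> (u \<bullet> u) * (v \<bullet> v)"
    using assms(1,2) Cauchy_Schwarz_ineq_sum[of "\<lambda>i. u $ i" "\<lambda>i. v $ i" "{0..<m}"]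
    by (simp add: scalar_prod_def power2_eq_square)
  thus ?thesis using assms(3,4) by (simp add: abs_square_le_1)
qed

locale unit_encoders =
  fixes T m :: nat and Eq Ed :: "nat \<Rightarrow> real vec"
  assumes Eq_unit: "\<forall>t<T. Eq t \<in> carrier_vec m \<and> Eq t \<bullet> Eq t = 1"
    and Ed_unit: "\<forall>t<T. Ed t \<in> carrier_vec m \<and> Ed t \<bullet> Ed t = 1"
begin

lemma abs_feature_le_1:
  assumes qd: "valid_pair T qd" and t: "t < T"
  shows "\<bar>feature T Eq Ed qd $ t\<bar> \<le> 1"
proof (cases "t \<in> set (fst qd)")
  case True
  define f where "f j = Eq t \<bullet> Ed (snd qd ! j)" for j
  have "snd qd \<noteq> []" using qd unfolding valid_pair_def by simp
  hence "Max (f ` {..<length (snd qd)}) \<in> f ` {..<length (snd qd)}" by (intro Max_in) auto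
  then obtain j where j: "j < length (snd qd)" and max: "Max (f ` {..<length (snd qd)}) = f j"
    by auto
  have "snd qd ! j < T" using qd j nth_mem unfolding valid_pair_def by blast
  hence "\<bar>f j\<bar> \<le> 1" unfolding f_def using Eq_unit Ed_unit t by (intro abs_scalar_prod_unit_le_1) auto
  thus ?thesis using True t max by (simp add: feature_def f_def)
qed (use t in \<open>simp add: feature_def\<close>)

lemma dot_feature_le_length:
  assumes qd: "valid_pair T qd"
  shows "dot T (vec_index (feature T Eq Ed qd)) (vec_index (feature T Eq Ed qd))
    \<le> real (length (fst qd))"
proof -
  have "dot T (vec_index (feature T Eq Ed qd)) (vec_index (feature T Eq Ed qd))
      \<le> (\<Sum>t<T. if t \<in> set (fst qd) then 1 else 0)"
    unfolding dot_def
  proof (intro sum_mono)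
    fix t assume "t \<in> {..<T}"
    hence "\<bar>feature T Eq Ed qd $ t\<bar> * \<bar>feature T Eq Ed qd $ t\<bar> \<le> 1 * 1"
      using abs_feature_le_1[OF qd] by (intro mult_mono) auto
    thus "feature T Eq Ed qd $ t * feature T Eq Ed qd $ t \<le> (if t \<in> set (fst qd) then 1 else 0)"
      using \<open>t \<in> {..<T}\<close> by (auto simp: feature_def abs_mult[symmetric])
  qed
  also have "\<dots> = real (card ({..<T} \<inter> set (fst qd)))"
    by (simp add: sum.If_cases)
  also have "\<dots> \<le> real (length (fst qd))"
    using card_mono[of "set (fst qd)" "{..<T} \<inter> set (fst qd)"] card_length[of "fst qd"] by simp
  finally show ?thesis .
qed

lemma weighted_dot_feature_le_1:
  assumes "valid_pair T qd"
  shows "1 / real (length (fst qd))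
    * dot T (vec_index (feature T Eq Ed qd)) (vec_index (feature T Eq Ed qd)) \<le> 1"
proof -
  have "1 / real (length (fst qd))
      * dot T (vec_index (feature T Eq Ed qd)) (vec_index (feature T Eq Ed qd))
      \<le> 1 / real (length (fst qd)) * real (length (fst qd))"
    using dot_feature_le_length[OF assms] by (intro mult_left_mono) auto
  also have "\<dots> \<le> 1" by (cases "length (fst qd) = 0") simp_all
  finally show ?thesis .
qed

lemma bilin_moment_matrix:
  assumes valid: "\<forall>qd\<in>set_pmf D. valid_pair T qd"
  shows "bilin T (moment_matrix T Eq Ed D) v v = measure_pmf.expectation D
    (\<lambda>qd. 1 / real (length (fst qd)) * (dot T v (vec_index (feature T Eq Ed qd)))\<^sup>2)"
proof -
  define x where "x qd i = feature T Eq Ed qd $ i" for qd i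
  define r where "r qd = 1 / real (length (fst qd))" for qd :: "nat list \<times> nat list"
  define h where "h i j = (\<lambda>qd. v i * v j * (r qd * x qd i * x qd j))" for i j
  have "r qd \<le> 1" for qd unfolding r_def by (cases "length (fst qd)") auto
  hence integrable_h: "integrable (measure_pmf D) (h i j)" if "i < T" "j < T" for i j
  proof (intro integrable_pmf_bounded[where B="\<bar>v i * v j\<bar>"])
    fix qd assume "qd \<in> set_pmf D"
    hence "\<bar>r qd * x qd i * x qd j\<bar> \<le> 1 * 1 * 1"
      unfolding abs_mult x_def using abs_feature_le_1 valid that \<open>\<And>qd. r qd \<le> 1\<close>
      by (intro mult_mono) (auto simp: r_def)
    thus "\<bar>h i j qd\<bar> \<le> \<bar>v i * v j\<bar>"
      unfolding h_def abs_mult[of "v i * v j"] by (simp add: mult_left_le)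
  qed
  have "bilin T (moment_matrix T Eq Ed D) v v = (\<Sum>i<T. \<Sum>j<T.
      v i * v j * measure_pmf.expectation D (\<lambda>qd. r qd * x qd i * x qd j))"
    unfolding bilin_def moment_matrix_def x_def r_def by (intro sum.cong refl) (simp add: mult_ac)
  also have "\<dots> = (\<Sum>i<T. \<Sum>j<T. measure_pmf.expectation D (h i j))"
    by (simp only: h_def integral_mult_right_zero)
  also have "\<dots> = (\<Sum>i<T. measure_pmf.expectation D (\<lambda>qd. \<Sum>j<T. h i j qd))"
    using integrable_h by (intro sum.cong refl Bochner_Integration.integral_sum[symmetric]) auto
  also have "\<dots> = measure_pmf.expectation D (\<lambda>qd. \<Sum>i<T. \<Sum>j<T. h i j qd)"
    using integrable_h
    by (intro Bochner_Integration.integral_sum[symmetric] Bochner_Integration.integrable_sum) auto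
  also have "\<dots> = measure_pmf.expectation D (\<lambda>qd. r qd * (dot T v (x qd))\<^sup>2)"
  proof (intro Bochner_Integration.integral_cong refl)
    fix qd
    have "(\<Sum>i<T. \<Sum>j<T. h i j qd)
        = (\<Sum>i<T. \<Sum>j<T. r qd * ((v i * x qd i) * (v j * x qd j)))"
      unfolding h_def by (intro sum.cong refl) (simp add: mult_ac)
    also have "\<dots> = r qd * ((\<Sum>i<T. v i * x qd i) * (\<Sum>j<T. v j * x qd j))"
      unfolding sum_product by (simp only: sum_distrib_left)
    also have "\<dots> = r qd * (dot T v (x qd))\<^sup>2"
      by (simp only: dot_def power2_eq_square)
    finally show "(\<Sum>i<T. \<Sum>j<T. h i j qd) = r qd * (dot T v (x qd))\<^sup>2" .
  qed
  finally show ?thesis unfolding r_def x_def .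
qed

lemma moment_matrix_weighted_design:
  assumes valid: "\<forall>qd\<in>set_pmf D. valid_pair T qd"
  shows "weighted_design T D (\<lambda>qd. vec_index (feature T Eq Ed qd))
    (\<lambda>qd. 1 / real (length (fst qd))) (lambda_min (moment_matrix T Eq Ed D))"
proof
  fix qd assume "qd \<in> set_pmf D"
  thus "1 / real (length (fst qd))
      * dot T (vec_index (feature T Eq Ed qd)) (vec_index (feature T Eq Ed qd)) \<le> 1"
    using valid weighted_dot_feature_le_1 by blast
next
  fix v
  have "moment_matrix T Eq Ed D \<in> carrier_mat T T" by (simp add: moment_matrix_def)
  moreover have "\<forall>i<T. \<forall>j<T. moment_matrix T Eq Ed D $$ (i, j) = moment_matrix T Eq Ed D $$ (j, i)"
    by (simp add: moment_matrix_def mult_ac)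
  ultimately
  have "lambda_min (moment_matrix T Eq Ed D) * dot T v v \<le> bilin T (moment_matrix T Eq Ed D) v v"
    by (rule lambda_min_mult_dot_le_bilin)
  thus "lambda_min (moment_matrix T Eq Ed D) * dot T v v \<le> measure_pmf.expectation D
      (\<lambda>qd. 1 / real (length (fst qd)) * (dot T v (vec_index (feature T Eq Ed qd)))\<^sup>2)"
    by (simp add: bilin_moment_matrix[OF valid])
qed simp

end

(* THE yields an unspecified vector when the system has no unique solution. *)
definition solve_linear_system :: "(real vec \<times> real) list \<Rightarrow> real vec" where
  "solve_linear_system L = (THE w. \<forall>(x, s)\<in>set L. w \<in> carrier_vec (dim_vec x) \<and> w \<bullet> x = s)"

lemma solve_linear_system_recovers:
  assumes xs: "set xs \<subseteq> carrier_vec n" and w: "w \<in> carrier_vec n"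
    and span: "spanning n (map vec_index xs)" and "0 < n"
  shows "solve_linear_system (map (\<lambda>x. (x, w \<bullet> x)) xs) = w"
  unfolding solve_linear_system_def
proof (rule the_equality)
  show "\<forall>(x, s)\<in>set (map (\<lambda>x. (x, w \<bullet> x)) xs). w \<in> carrier_vec (dim_vec x) \<and> w \<bullet> x = s"
    using xs w by auto
next
  fix w' assume w': "\<forall>(x, s)\<in>set (map (\<lambda>x. (x, w \<bullet> x)) xs). w' \<in> carrier_vec (dim_vec x) \<and> w' \<bullet> x = s"
  have "xs \<noteq> []"
  proof
    assume "xs = []"
    hence "(\<lambda>_. 1::real) 0 = 0" by (intro spanningD[OF span _ \<open>0 < n\<close>]) simp
    thus False by simp
  qed
  hence w'_carrier: "w' \<in> carrier_vec n" using w' xs by (cases xs) auto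
  have orth: "dot n (\<lambda>i. w' $ i - w $ i) y = 0" if "y \<in> set (map vec_index xs)" for y
  proof -
    obtain x where x: "x \<in> set xs" and y: "y = vec_index x" using \<open>y \<in> set (map vec_index xs)\<close> by auto
    have "dot n (\<lambda>i. w' $ i - w $ i) y = w' \<bullet> x - w \<bullet> x"
      using xs x unfolding dot_def y
      by (auto simp: scalar_prod_def atLeast0LessThan left_diff_distrib sum_subtractf)
    thus ?thesis using w' x by auto
  qed
  have "w' $ i - w $ i = 0" if "i < n" for i using spanningD[OF span orth that] by simp
  thus "w' = w" using w w'_carrier by (intro eq_vecI) auto
qed

lemma solve_linear_system_features:
  assumes w: "w \<in> carrier_vec T" and "0 < T"
    and span: "spanning T (map (\<lambda>qd. vec_index (feature T Eq Ed qd)) S)"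
  shows "solve_linear_system (map (\<lambda>qd. (feature T Eq Ed qd, w \<bullet> feature T Eq Ed qd)) S) = w"
proof -
  have "set (map (feature T Eq Ed) S) \<subseteq> carrier_vec T" by (auto simp: feature_def)
  moreover have "spanning T (map vec_index (map (feature T Eq Ed) S))" using span by (simp add: comp_def)
  ultimately have "solve_linear_system (map (\<lambda>x. (x, w \<bullet> x)) (map (feature T Eq Ed) S)) = w"
    by (rule solve_linear_system_recovers[OF _ w _ \<open>0 < T\<close>])
  thus ?thesis by (simp add: comp_def)
qed

lemma mult_power_one_minus_le:
  fixes \<kappa> \<delta> N :: real
  assumes "0 < \<kappa>" "\<kappa> \<le> 1" "0 < \<delta>" "0 < N" and k: "real k \<ge> 1 / \<kappa> * ln (N / \<delta>)"
  shows "N * (1 - \<kappa>) ^ k \<le> \<delta>"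
proof -
  have "(1 - \<kappa>) ^ k \<le> exp (- \<kappa>) ^ k"
    using exp_ge_add_one_self[of "- \<kappa>"] assms(2) by (intro power_mono) auto
  also have "\<dots> = exp (- (\<kappa> * real k))" by (simp add: exp_of_nat_mult[symmetric] mult.commute)
  also have "\<dots> \<le> exp (- ln (N / \<delta>))" using k assms(1) by (simp add: field_simps)
  also have "\<dots> = \<delta> / N" using assms(3,4) by (simp add: exp_minus)
  finally show ?thesis using assms(4) by (simp add: field_simps)
qed

theorem theorem1:
  shows "\<exists>C::real. C > 0 \<and> (\<exists>alg :: (real vec \<times> real) list \<Rightarrow> real vec.
    \<forall>(T::nat) (m::nat) (Eq :: nat \<Rightarrow> real vec) (Ed :: nat \<Rightarrow> real vec)
      (D :: (nat list \<times> nat list) pmf) (w :: real vec) (\<delta>::real) (n::nat).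
      T > 0 \<longrightarrow>
      (\<forall>t<T. Eq t \<in> carrier_vec m \<and> Eq t \<bullet> Eq t = 1) \<longrightarrow>
      (\<forall>t<T. Ed t \<in> carrier_vec m \<and> Ed t \<bullet> Ed t = 1) \<longrightarrow>
      (\<forall>qd \<in> set_pmf D. valid_pair T qd) \<longrightarrow>
      w \<in> carrier_vec T \<longrightarrow>
      lambda_min (moment_matrix T Eq Ed D) > 0 \<longrightarrow>
      0 < \<delta> \<longrightarrow> \<delta> < 1 \<longrightarrow>
      real n \<ge> C / lambda_min (moment_matrix T Eq Ed D) * ln (real T / \<delta>) \<longrightarrow>
      measure_pmf.prob (replicate_pmf n D)
        {S. alg (map (\<lambda>qd. (feature T Eq Ed qd, w \<bullet> feature T Eq Ed qd)) S) = w}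
        \<ge> 1 - \<delta>)"
proof (intro exI[of _ 1] conjI exI[of _ solve_linear_system] allI impI)
  fix T m :: nat and Eq Ed :: "nat \<Rightarrow> real vec" and D :: "(nat list \<times> nat list) pmf"
    and w :: "real vec" and \<delta> :: real and n :: nat
  assume "T > 0" and unit_Eq: "\<forall>t<T. Eq t \<in> carrier_vec m \<and> Eq t \<bullet> Eq t = 1"
    and unit_Ed: "\<forall>t<T. Ed t \<in> carrier_vec m \<and> Ed t \<bullet> Ed t = 1"
    and valid: "\<forall>qd \<in> set_pmf D. valid_pair T qd" and w: "w \<in> carrier_vec T"
    and pos: "lambda_min (moment_matrix T Eq Ed D) > 0" and "0 < \<delta>"
    and n: "real n \<ge> 1 / lambda_min (moment_matrix T Eq Ed D) * ln (real T / \<delta>)"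
  interpret unit_encoders T m Eq Ed using unit_Eq unit_Ed by unfold_locales
  interpret weighted_design T D "\<lambda>qd. vec_index (feature T Eq Ed qd)"
    "\<lambda>qd. 1 / real (length (fst qd))" "lambda_min (moment_matrix T Eq Ed D)"
    by (rule moment_matrix_weighted_design[OF valid])
  let ?spanning = "{S. spanning T (map (\<lambda>qd. vec_index (feature T Eq Ed qd)) S)}"
  have "measure_pmf.prob (replicate_pmf n D) (UNIV - ?spanning)
      \<le> real T * (1 - lambda_min (moment_matrix T Eq Ed D)) ^ n"
    using prob_not_spanning_le[of "[]" n] by (simp add: orthonormal_def set_diff_eq)
  also have "\<dots> \<le> \<delta>"
    using mult_power_one_minus_le coercivity_le_1 \<open>T > 0\<close> pos \<open>0 < \<delta>\<close> n by simp
  finally have "1 - \<delta> \<le> measure_pmf.prob (replicate_pmf n D) ?spanning"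
    using measure_pmf.prob_compl[of ?spanning "replicate_pmf n D"] by simp
  also have "\<dots> \<le> measure_pmf.prob (replicate_pmf n D)
      {S. solve_linear_system (map (\<lambda>qd. (feature T Eq Ed qd, w \<bullet> feature T Eq Ed qd)) S) = w}"
    using solve_linear_system_features[OF w \<open>T > 0\<close>]
    by (intro measure_pmf.finite_measure_mono) auto
  finally show "1 - \<delta> \<le> measure_pmf.prob (replicate_pmf n D)
      {S. solve_linear_system (map (\<lambda>qd. (feature T Eq Ed qd, w \<bullet> feature T Eq Ed qd)) S) = w}" .
qed simp

end
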